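(* Let $T$ be the regular rooted tree of valence $p\geq 2$ with the embedded wire diffeology $\mathcal{D}_T$. Then the functional diffeology on $\operatorname{Aut}T$ is the discrete diffeology; that is, every plot $P:U\to\operatorname{Aut}T$ (with $U$ an open subset of some $\mathbb{R}^k$) of the functional diffeology is locally constant.
   Context: Fix a finite alphabet $A$ with $|A|=p\geq 2$. The vertices of $T$ are the finite words over $A$ (the root is the empty word); two vertices are joined by an edge iff they have the form $a_1\dots a_n$ and $a_1\dots a_na_{n+1}$. As a topological space, $T$ is the 1-dimensional CW complex obtained by realizing each edge as a copy of $[0,1]$, with its usual topology. $\operatorname{Aut}T$ is the group of bijections of the vertex set fixing the root and preserving adjacency; each is regarded as a homeomorphism of the geometric realization mapping each edge affinely onto its image edge. A diffeology on a set $X$ is a collection of maps $U\to X$ ("plots"), $U$ ranging over open subsets of all $\mathbb{R}^n$, containing all constant maps, closed under precomposition with smooth maps, and satisfying the sheaf condition. The discrete diffeology on $X$ consists of all locally constant maps $U\to X$. The embedded wire diffeology $\mathcal{D}_T$ is the diffeology on $T$ generated by (i.e. the smallest diffeology containing) all maps $\gamma:\mathbb{R}\to T$ that are injective, continuous, and homeomorphisms onto their images. A map between diffeological spaces is smooth if it sends plots to plots. The functional diffeology on $C^\infty(T,T)$ is the coarsest diffeology such that the evaluation map $C^\infty(T,T)\times T\to T$ is smooth (with the product diffeology, the coarsest making projections smooth); $\operatorname{Aut}T\subseteq C^\infty(T,T)$ carries the subset diffeology. Equivalently, $P:U\to\operatorname{Aut}T$ is a plot iff $(u,x)\mapsto P(u)(x)$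 is smooth $U\times T\to T$. *)

theory Defs
  imports "HOL-Analysis.Analysis"
begin

text \<open>R^n is encoded as the set of real sequences vanishing from index n on;
  nat => real carries the product topology, which restricts to the Euclidean
  topology on this set.\<close>

definition Rn :: "nat \<Rightarrow> (nat \<Rightarrow> real) set" where
  "Rn n = {x. \<forall>i\<ge>n. x i = 0}"

definition Rn_top :: "nat \<Rightarrow> (nat \<Rightarrow> real) topology" where
  "Rn_top n = subtopology euclidean (Rn n)"

text \<open>C-infinity real-valued functions on an open W in R^m: all iterated partial
  derivatives exist and are continuous on W (D vs is the iterated partial
  derivative along the coordinate indices listed in vs).\<close>

definition smooth_fun :: "nat \<Rightarrow> (nat \<Rightarrow> real) set \<Rightarrow> ((nat \<Rightarrow> real) \<Rightarrow> real) \<Rightarrow> bool" where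
  "smooth_fun m W g \<longleftrightarrow>
     (\<exists>D :: nat list \<Rightarrow> (nat \<Rightarrow> real) \<Rightarrow> real.
        (\<forall>x\<in>W. D [] x = g x) \<and>
        (\<forall>vs\<in>lists {..<m}. continuous_on W (D vs)) \<and>
        (\<forall>vs\<in>lists {..<m}. \<forall>i<m. \<forall>x\<in>W.
            ((\<lambda>t. D vs (x(i := x i + t))) has_real_derivative D (i # vs) x) (at 0)))"

definition smooth_map :: "nat \<Rightarrow> (nat \<Rightarrow> real) set \<Rightarrow> nat \<Rightarrow> (nat \<Rightarrow> real) set
                          \<Rightarrow> ((nat \<Rightarrow> real) \<Rightarrow> (nat \<Rightarrow> real)) \<Rightarrow> bool" where
  "smooth_map m V n U F \<longleftrightarrow> F ` V \<subseteq> U \<and> (\<forall>i<n. smooth_fun m V (\<lambda>v. F v i))"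

text \<open>A diffeology on a set X is given as a predicate D n U P meaning
  "P restricted to U is a plot, U open in R^n". Values of P outside U are irrelevant.\<close>

definition is_diffeology :: "'x set \<Rightarrow> (nat \<Rightarrow> (nat \<Rightarrow> real) set \<Rightarrow> ((nat \<Rightarrow> real) \<Rightarrow> 'x) \<Rightarrow> bool) \<Rightarrow> bool" where
  "is_diffeology X D \<longleftrightarrow>
     (\<forall>n U P. D n U P \<longrightarrow> openin (Rn_top n) U \<and> P ` U \<subseteq> X) \<and>
     (\<forall>n U P Q. D n U P \<and> (\<forall>u\<in>U. Q u = P u) \<longrightarrow> D n U Q) \<and>
     (\<forall>n U x. openin (Rn_top n) U \<and> x \<in> X \<longrightarrow> D n U (\<lambda>_. x)) \<and>
     (\<forall>n U P m V F. D n U P \<and> openin (Rn_top m) V \<and> smooth_map m V n U F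
         \<longrightarrow> D m V (P \<circ> F)) \<and>
     (\<forall>n U P. openin (Rn_top n) U \<and> P ` U \<subseteq> X \<and>
         (\<forall>u\<in>U. \<exists>V. openin (Rn_top n) V \<and> u \<in> V \<and> V \<subseteq> U \<and> D n V P)
         \<longrightarrow> D n U P)"

text \<open>Plots of the diffeology generated by a family G of maps R -> X
  (smallest diffeology containing them; a map g : R -> X is the plot x |-> g (x 0) on R^1).\<close>

definition gen_plot :: "'x set \<Rightarrow> (real \<Rightarrow> 'x) set \<Rightarrow> nat \<Rightarrow> (nat \<Rightarrow> real) set \<Rightarrow> ((nat \<Rightarrow> real) \<Rightarrow> 'x) \<Rightarrow> bool" where
  "gen_plot X G n U P \<longleftrightarrow>
     (\<forall>D. is_diffeology X D \<and> (\<forall>g\<in>G. D 1 (Rn 1) (\<lambda>x. g (x 0))) \<longrightarrow> D n U P)"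

definition discrete_plot :: "'x set \<Rightarrow> nat \<Rightarrow> (nat \<Rightarrow> real) set \<Rightarrow> ((nat \<Rightarrow> real) \<Rightarrow> 'x) \<Rightarrow> bool" where
  "discrete_plot X n U P \<longleftrightarrow> openin (Rn_top n) U \<and> P ` U \<subseteq> X \<and>
     (\<forall>u\<in>U. \<exists>V. openin (Rn_top n) V \<and> u \<in> V \<and> V \<subseteq> U \<and> (\<forall>v\<in>V. P v = P u))"

text \<open>A point of the realization is either a vertex v,
  encoded (v, 1), or an interior point of the edge from butlast w to w (w nonempty) at
  parameter s in (0,1) measured from the parent butlast w, encoded (w, s).\<close>

definition Tpts :: "'a set \<Rightarrow> ('a list \<times> real) set" where
  "Tpts A = {(v, 1) | v. v \<in> lists A} \<union> {(w, s) | w s. w \<in> lists A \<and> w \<noteq> [] \<and> 0 < s \<and> s < 1}"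

text \<open>Characteristic map [0,1] -> T of the edge ending at the nonempty word w.\<close>

definition edge_map :: "'a list \<Rightarrow> real \<Rightarrow> 'a list \<times> real" where
  "edge_map w t = (if t = 0 then (butlast w, 1) else (w, t))"

text \<open>CW (weak) topology: S is open iff its preimage under every characteristic map is open in [0,1].\<close>

definition T_open :: "'a set \<Rightarrow> ('a list \<times> real) set \<Rightarrow> bool" where
  "T_open A S \<longleftrightarrow> S \<subseteq> Tpts A \<and>
     (\<forall>w\<in>lists A - {[]}. openin (top_of_set {0..1::real}) {t\<in>{0..1}. edge_map w t \<in> S})"

definition T_top :: "'a set \<Rightarrow> ('a list \<times> real) topology" where
  "T_top A = topology (T_open A)"

lemma istopology_T_open: "istopology (T_open A)"
  unfolding istopology_def
proof (intro conjI allI impI)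
  fix S T assume "T_open A S" "T_open A T"
  then show "T_open A (S \<inter> T)"
    unfolding T_open_def
  proof (intro conjI ballI)
    show "S \<inter> T \<subseteq> Tpts A" using \<open>T_open A S\<close> by (auto simp: T_open_def)
  next
    fix w assume w: "w \<in> lists A - {[]}"
    have "{t\<in>{0..1}. edge_map w t \<in> S \<inter> T} = {t\<in>{0..1}. edge_map w t \<in> S} \<inter> {t\<in>{0..1}. edge_map w t \<in> T}" by auto
    moreover have "openin (top_of_set {0..1::real}) ({t\<in>{0..1}. edge_map w t \<in> S} \<inter> {t\<in>{0..1}. edge_map w t \<in> T})"
      using \<open>T_open A S\<close> \<open>T_open A T\<close> w by (intro openin_Int) (auto simp: T_open_def)
    ultimately show "openin (top_of_set {0..1::real}) {t\<in>{0..1}. edge_map w t \<in> S \<inter> T}" by simp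
  qed
next
  fix K assume K: "\<forall>S\<in>K. T_open A S"
  show "T_open A (\<Union>K)"
    unfolding T_open_def
  proof (intro conjI ballI)
    show "\<Union>K \<subseteq> Tpts A" using K by (auto simp: T_open_def)
  next
    fix w assume w: "w \<in> lists A - {[]}"
    have "{t\<in>{0..1}. edge_map w t \<in> \<Union>K} = (\<Union>S\<in>K. {t\<in>{0..1}. edge_map w t \<in> S})" by auto
    moreover have "openin (top_of_set {0..1::real}) (\<Union>S\<in>K. {t\<in>{0..1}. edge_map w t \<in> S})"
      using K w by (intro openin_Union) (auto simp: T_open_def)
    ultimately show "openin (top_of_set {0..1::real}) {t\<in>{0..1}. edge_map w t \<in> \<Union>K}" by simp
  qed
qed

definition wires :: "'a set \<Rightarrow> (real \<Rightarrow> 'a list \<times> real) set" where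
  "wires A = {\<gamma>. range \<gamma> \<subseteq> Tpts A \<and> inj \<gamma> \<and> continuous_map euclideanreal (T_top A) \<gamma> \<and>
                  homeomorphic_map euclideanreal (subtopology (T_top A) (range \<gamma>)) \<gamma>}"

abbreviation wire_plot :: "'a set \<Rightarrow> nat \<Rightarrow> (nat \<Rightarrow> real) set \<Rightarrow> ((nat \<Rightarrow> real) \<Rightarrow> 'a list \<times> real) \<Rightarrow> bool" where
  "wire_plot A \<equiv> gen_plot (Tpts A) (wires A)"

definition tree_adj :: "'a set \<Rightarrow> 'a list \<Rightarrow> 'a list \<Rightarrow> bool" where
  "tree_adj A u v \<longleftrightarrow> (\<exists>a\<in>A. v = u @ [a]) \<or> (\<exists>a\<in>A. u = v @ [a])"

definition is_tree_aut :: "'a set \<Rightarrow> ('a list \<Rightarrow> 'a list) \<Rightarrow> bool" where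
  "is_tree_aut A g \<longleftrightarrow> bij_betw g (lists A) (lists A) \<and> g [] = [] \<and>
     (\<forall>u\<in>lists A. \<forall>v\<in>lists A. tree_adj A u v \<longleftrightarrow> tree_adj A (g u) (g v))"

text \<open>Action of a vertex automorphism on the realization (affine on edges), extended by
  the identity outside the realization.\<close>

definition realize :: "'a set \<Rightarrow> ('a list \<Rightarrow> 'a list) \<Rightarrow> ('a list \<times> real \<Rightarrow> 'a list \<times> real)" where
  "realize A g p = (if p \<in> Tpts A then (g (fst p), snd p) else p)"

definition AutT :: "'a set \<Rightarrow> ('a list \<times> real \<Rightarrow> 'a list \<times> real) set" where
  "AutT A = realize A ` {g. is_tree_aut A g}"

text \<open>Plots of the functional diffeology on Aut T: (u,x) |-> P u x is smooth U x T -> T,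
  i.e. composed with every plot (F, Q) of the product diffeology (F smooth into U,
  Q a wire plot) it yields a wire plot.\<close>

definition aut_plot :: "'a set \<Rightarrow> nat \<Rightarrow> (nat \<Rightarrow> real) set
                        \<Rightarrow> ((nat \<Rightarrow> real) \<Rightarrow> ('a list \<times> real \<Rightarrow> 'a list \<times> real)) \<Rightarrow> bool" where
  "aut_plot A k U P \<longleftrightarrow> openin (Rn_top k) U \<and> P ` U \<subseteq> AutT A \<and>
     (\<forall>m W F Q. openin (Rn_top m) W \<and> smooth_map m W k U F \<and> wire_plot A m W Q
        \<longrightarrow> wire_plot A m W (\<lambda>w. P (F w) (Q w)))"

end

theory Submission
  imports Defs
begin

text \<open>For a plot \<open>P\<close> of the functional diffeology and a vertex \<open>v\<close>, evaluating \<open>P\<close> on the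
  constant plot at \<open>v\<close> shows that \<open>u \<mapsto> P u v\<close> is a wire plot, hence continuous into the CW
  topology. Its values are vertices, and the open star of a vertex \<open>w\<close> contains no vertex
  other than \<open>w\<close>; so \<open>u \<mapsto> P u v\<close> has open level sets and is constant on connected open
  subsets of \<open>U\<close>. Every point of \<open>U\<close> has such a neighbourhood (a box), and an automorphism is
  determined by its action on vertices, so \<open>P\<close> is locally constant. Conversely, near each point a
  locally constant \<open>P\<close> is a single automorphism, which maps embedded wires to embedded wires and
  hence wire plots to wire plots.\<close>

lemma is_diffeologyI:
  assumes "\<And>n U P. D n U P \<Longrightarrow> openin (Rn_top n) U \<and> P ` U \<subseteq> X"
    and "\<And>n U P Q. D n U P \<Longrightarrow> (\<And>u. u \<in> U \<Longrightarrow> Q u = P u) \<Longrightarrow> D n U Q"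
    and "\<And>n U x. openin (Rn_top n) U \<Longrightarrow> x \<in> X \<Longrightarrow> D n U (\<lambda>_. x)"
    and "\<And>n U P m V F. D n U P \<Longrightarrow> openin (Rn_top m) V \<Longrightarrow> smooth_map m V n U F
      \<Longrightarrow> D m V (P \<circ> F)"
    and "\<And>n U P. openin (Rn_top n) U \<Longrightarrow> P ` U \<subseteq> X
      \<Longrightarrow> (\<And>u. u \<in> U \<Longrightarrow> \<exists>V. openin (Rn_top n) V \<and> u \<in> V \<and> V \<subseteq> U \<and> D n V P)
      \<Longrightarrow> D n U P"
  shows "is_diffeology X D"
  unfolding is_diffeology_def using assms by (intro conjI allI impI; (elim conjE)?) metis+

lemma diffeology_plot_domain:
  assumes "is_diffeology X D" "D n U P"
  shows "openin (Rn_top n) U" "P ` U \<subseteq> X"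
proof -
  from assms(1) have "\<forall>n U P. D n U P \<longrightarrow> openin (Rn_top n) U \<and> P ` U \<subseteq> X"
    unfolding is_diffeology_def by (elim conjE)
  then show "openin (Rn_top n) U" "P ` U \<subseteq> X" using assms(2) by blast+
qed

lemma diffeology_plot_cong:
  assumes "is_diffeology X D" "D n U P" "\<And>u. u \<in> U \<Longrightarrow> Q u = P u"
  shows "D n U Q"
proof -
  from assms(1) have "\<forall>n U P Q. D n U P \<and> (\<forall>u\<in>U. Q u = P u) \<longrightarrow> D n U Q"
    unfolding is_diffeology_def by (elim conjE)
  then show ?thesis using assms(2,3) by blast
qed

lemma diffeology_const_plot:
  assumes "is_diffeology X D" "openin (Rn_top n) U" "x \<in> X"
  shows "D n U (\<lambda>_. x)"
proof -
  from assms(1) have "\<forall>n U x. openin (Rn_top n) U \<and> x \<in> X \<longrightarrow> D n U (\<lambda>_. x)"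
    unfolding is_diffeology_def by (elim conjE)
  then show ?thesis using assms(2,3) by blast
qed

lemma diffeology_plot_compose:
  assumes "is_diffeology X D" "D n U P" "openin (Rn_top m) V" "smooth_map m V n U F"
  shows "D m V (P \<circ> F)"
proof -
  from assms(1) have "\<forall>n U P m V F. D n U P \<and> openin (Rn_top m) V \<and> smooth_map m V n U F
      \<longrightarrow> D m V (P \<circ> F)"
    unfolding is_diffeology_def by (elim conjE)
  then show ?thesis using assms(2-4) by blast
qed

lemma diffeology_plot_local:
  assumes "is_diffeology X D" "openin (Rn_top n) U" "P ` U \<subseteq> X"
    and "\<And>u. u \<in> U \<Longrightarrow> \<exists>V. openin (Rn_top n) V \<and> u \<in> V \<and> V \<subseteq> U \<and> D n V P"
  shows "D n U P"
proof -
  from assms(1) have "\<forall>n U P. openin (Rn_top n) U \<and> P ` U \<subseteq> X \<and>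
      (\<forall>u\<in>U. \<exists>V. openin (Rn_top n) V \<and> u \<in> V \<and> V \<subseteq> U \<and> D n V P) \<longrightarrow> D n U P"
    unfolding is_diffeology_def by (elim conjE)
  then show ?thesis using assms(2-4) by blast
qed

lemma gen_plot_least:
  assumes "gen_plot X G n U P" "is_diffeology X D" "\<And>g. g \<in> G \<Longrightarrow> D 1 (Rn 1) (\<lambda>x. g (x 0))"
  shows "D n U P"
  using assms unfolding gen_plot_def by blast

lemma gen_plot_generator:
  assumes "g \<in> G"
  shows "gen_plot X G 1 (Rn 1) (\<lambda>x. g (x 0))"
  using assms unfolding gen_plot_def by blast

lemma gen_plotI:
  assumes "\<And>D. is_diffeology X D \<Longrightarrow> (\<And>g. g \<in> G \<Longrightarrow> D 1 (Rn 1) (\<lambda>x. g (x 0))) \<Longrightarrow> D n U P"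
  shows "gen_plot X G n U P"
  using assms unfolding gen_plot_def by blast

lemma gen_plot_diffeology:
  assumes G: "\<And>g. g \<in> G \<Longrightarrow> range g \<subseteq> X"
  shows "is_diffeology X (gen_plot X G)"
proof (rule is_diffeologyI)
  have open_plots: "is_diffeology X (\<lambda>n U P. openin (Rn_top n) U \<and> P ` U \<subseteq> X)"
    by (rule is_diffeologyI) (auto simp: smooth_map_def image_subset_iff)
  fix n U P assume "gen_plot X G n U P"
  then show "openin (Rn_top n) U \<and> P ` U \<subseteq> X"
  proof (rule gen_plot_least[OF _ open_plots])
    fix g assume "g \<in> G"
    with G show "openin (Rn_top 1) (Rn 1) \<and> (\<lambda>x. g (x 0)) ` Rn 1 \<subseteq> X"
      by (auto simp: Rn_top_def)
  qed
next
  fix n U P Q assume P: "gen_plot X G n U P" and Q: "\<And>u. u \<in> U \<Longrightarrow> Q u = P u"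
  show "gen_plot X G n U Q"
  proof (rule gen_plotI)
    fix D assume D: "is_diffeology X D" "\<And>g. g \<in> G \<Longrightarrow> D 1 (Rn 1) (\<lambda>x. g (x 0))"
    show "D n U Q" by (rule diffeology_plot_cong[OF D(1) gen_plot_least[OF P D] Q])
  qed
next
  fix n U x assume "openin (Rn_top n) U" "x \<in> X"
  then show "gen_plot X G n U (\<lambda>_. x)"
    by (intro gen_plotI) (rule diffeology_const_plot)
next
  fix n U P m V F assume P: "gen_plot X G n U P" and VF: "openin (Rn_top m) V" "smooth_map m V n U F"
  show "gen_plot X G m V (P \<circ> F)"
  proof (rule gen_plotI)
    fix D assume D: "is_diffeology X D" "\<And>g. g \<in> G \<Longrightarrow> D 1 (Rn 1) (\<lambda>x. g (x 0))"
    show "D m V (P \<circ> F)" by (rule diffeology_plot_compose[OF D(1) gen_plot_least[OF P D] VF])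
  qed
next
  fix n U P assume U: "openin (Rn_top n) U" "P ` U \<subseteq> X"
    and loc: "\<And>u. u \<in> U \<Longrightarrow> \<exists>V. openin (Rn_top n) V \<and> u \<in> V \<and> V \<subseteq> U \<and> gen_plot X G n V P"
  show "gen_plot X G n U P"
  proof (rule gen_plotI)
    fix D assume D: "is_diffeology X D" "\<And>g. g \<in> G \<Longrightarrow> D 1 (Rn 1) (\<lambda>x. g (x 0))"
    show "D n U P"
    proof (rule diffeology_plot_local[OF D(1) U])
      fix u assume "u \<in> U"
      with loc obtain V where V: "openin (Rn_top n) V" "u \<in> V" "V \<subseteq> U" "gen_plot X G n V P"
        by blast
      show "\<exists>V. openin (Rn_top n) V \<and> u \<in> V \<and> V \<subseteq> U \<and> D n V P"
        using V(1-3) gen_plot_least[OF V(4) D] by blast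
    qed
  qed
qed

lemma pullback_diffeology:
  assumes D: "is_diffeology Y D" and f: "f ` X \<subseteq> Y"
  shows "is_diffeology X (\<lambda>n U R. openin (Rn_top n) U \<and> R ` U \<subseteq> X \<and> D n U (f \<circ> R))"
proof (rule is_diffeologyI)
  fix n U R Q assume "openin (Rn_top n) U \<and> R ` U \<subseteq> X \<and> D n U (f \<circ> R)" "\<And>u. u \<in> U \<Longrightarrow> Q u = R u"
  then show "openin (Rn_top n) U \<and> Q ` U \<subseteq> X \<and> D n U (f \<circ> Q)"
    by (auto intro: diffeology_plot_cong[OF D])
next
  fix n U x assume "openin (Rn_top n) U" "x \<in> X"
  then show "openin (Rn_top n) U \<and> (\<lambda>_. x) ` U \<subseteq> X \<and> D n U (f \<circ> (\<lambda>_. x))"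
    using f diffeology_const_plot[OF D, of n U "f x"] by (auto simp: comp_def)
next
  fix n U R m V F
  assume "openin (Rn_top n) U \<and> R ` U \<subseteq> X \<and> D n U (f \<circ> R)" "openin (Rn_top m) V"
    "smooth_map m V n U F"
  then show "openin (Rn_top m) V \<and> (R \<circ> F) ` V \<subseteq> X \<and> D m V (f \<circ> (R \<circ> F))"
    using diffeology_plot_compose[OF D, of n U "f \<circ> R" m V F]
    by (auto simp: smooth_map_def comp_assoc)
next
  fix n U R assume U: "openin (Rn_top n) U" and R: "R ` U \<subseteq> X"
    and loc: "\<And>u. u \<in> U \<Longrightarrow> \<exists>V. openin (Rn_top n) V \<and> u \<in> V \<and> V \<subseteq> U \<and>
      openin (Rn_top n) V \<and> R ` V \<subseteq> X \<and> D n V (f \<circ> R)"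
  have "(f \<circ> R) ` U \<subseteq> Y" using f R by auto
  then have "D n U (f \<circ> R)"
  proof (rule diffeology_plot_local[OF D U])
    fix u assume "u \<in> U"
    from loc[OF this] show "\<exists>V. openin (Rn_top n) V \<and> u \<in> V \<and> V \<subseteq> U \<and> D n V (f \<circ> R)"
      by meson
  qed
  with U R show "openin (Rn_top n) U \<and> R ` U \<subseteq> X \<and> D n U (f \<circ> R)" by blast
qed blast

lemma gen_plot_map:
  assumes G: "\<And>g. g \<in> G \<Longrightarrow> range g \<subseteq> X"
    and f: "f ` X \<subseteq> X" "\<And>g. g \<in> G \<Longrightarrow> f \<circ> g \<in> G"
    and R: "gen_plot X G n U R"
  shows "gen_plot X G n U (f \<circ> R)"
proof -
  have "openin (Rn_top n) U \<and> R ` U \<subseteq> X \<and> gen_plot X G n U (f \<circ> R)"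
  proof (rule gen_plot_least[OF R pullback_diffeology[OF gen_plot_diffeology[OF G] f(1)]])
    fix g assume "g \<in> G"
    then show "openin (Rn_top 1) (Rn 1) \<and> (\<lambda>x. g (x 0)) ` Rn 1 \<subseteq> X \<and>
        gen_plot X G 1 (Rn 1) (f \<circ> (\<lambda>x. g (x 0)))"
      using G gen_plot_generator[OF f(2)] by (auto simp: Rn_top_def comp_def)
  qed
  then show ?thesis by blast
qed

lemma openin_Rn_top_subset: "openin (Rn_top n) U \<Longrightarrow> U \<subseteq> Rn n"
  unfolding Rn_top_def by (meson openin_imp_subset)

lemma smooth_fun_continuous: "smooth_fun m W g \<Longrightarrow> continuous_on W g"
  unfolding smooth_fun_def by (metis continuous_on_cong lists.Nil)

lemma smooth_map_continuous:
  assumes F: "smooth_map m V n U F" and U: "openin (Rn_top n) U"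
  shows "continuous_on V F"
proof (rule continuous_on_coordinatewise_then_product)
  fix i show "continuous_on V (\<lambda>x. F x i)"
  proof (cases "i < n")
    case True
    then show ?thesis using F smooth_fun_continuous unfolding smooth_map_def by blast
  next
    case False
    then have "\<forall>x\<in>V. F x i = 0"
      using F openin_Rn_top_subset[OF U] unfolding smooth_map_def Rn_def by (auto simp: not_less)
    then show ?thesis using continuous_on_cong continuous_on_const by (metis (no_types, lifting))
  qed
qed

lemma smooth_fun_coordinate: "smooth_fun m W (\<lambda>x. x i)"
  unfolding smooth_fun_def
proof (intro exI[of _ "\<lambda>vs x. if vs = [] then x i else if vs = [i] then 1 else 0"] conjI ballI allI impI)
  fix vs :: "nat list"
  show "continuous_on W (\<lambda>x. if vs = [] then x i else if vs = [i] then 1 else (0::real))"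
    by (cases "vs = []") (auto intro: continuous_on_subset[OF continuous_on_product_coordinates])
next
  fix vs :: "nat list" and j x
  show "((\<lambda>t. if vs = [] then (x(j := x j + t)) i else if vs = [i] then 1 else 0) has_real_derivative
         (if j # vs = [] then x i else if j # vs = [i] then 1 else 0)) (at 0)"
    by (cases "vs = []"; cases "j = i") (auto intro!: derivative_eq_intros)
qed simp

lemma smooth_map_inclusion: "V \<subseteq> U \<Longrightarrow> smooth_map m V m U id"
  unfolding smooth_map_def using smooth_fun_coordinate by auto

lemma diffeology_plot_restrict:
  assumes "is_diffeology X D" "D n U P" "openin (Rn_top n) V" "V \<subseteq> U"
  shows "D n V P"
  using diffeology_plot_compose[OF assms(1-3) smooth_map_inclusion[OF assms(4)]] by simp

lemma openin_Rn_top_preimage: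
  assumes V: "openin (Rn_top m) V" and F: "continuous_on V F" "F ` V \<subseteq> U"
    and U: "openin (Rn_top n) U" and W: "openin (Rn_top n) W"
  shows "openin (Rn_top m) {v\<in>V. F v \<in> W}"
proof -
  obtain T where T: "open T" "W = Rn n \<inter> T" using W unfolding Rn_top_def openin_open by blast
  have "{v\<in>V. F v \<in> W} = V \<inter> F -` T" using F(2) openin_Rn_top_subset[OF U] T by auto
  moreover have "openin (top_of_set V) (V \<inter> F -` T)"
    by (rule continuous_openin_preimage_gen[OF F(1) T(1)])
  ultimately have "openin (top_of_set V) {v\<in>V. F v \<in> W}" by simp
  then show ?thesis using V unfolding Rn_top_def by (rule openin_trans)
qed

text \<open>A basic open box of the product topology, intersected with \<open>Rn k\<close>, is a product of balls
  and singletons, hence connected.\<close>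

lemma Rn_top_connected_neighbourhood:
  assumes U: "openin (Rn_top k) U" and u0: "u0 \<in> U"
  obtains V where "openin (Rn_top k) V" "u0 \<in> V" "V \<subseteq> U" "connected V"
proof -
  obtain T where T: "open T" "U = Rn k \<inter> T" using U unfolding Rn_top_def openin_open by blast
  have "openin (product_topology (\<lambda>i. euclidean) UNIV) T" using T(1) by (simp add: open_fun_def)
  then obtain X where X: "u0 \<in> Pi\<^sub>E UNIV X" "\<And>i. open (X i)" "Pi\<^sub>E UNIV X \<subseteq> T"
    using product_topology_open_contains_basis[of "\<lambda>i. euclidean" UNIV T u0] u0 T(2) by auto
  have "\<exists>e>0. ball (u0 i) e \<subseteq> X i" for i
    using X(1,2) by (simp add: PiE_iff open_contains_ball)
  then obtain e where e: "\<And>i. e i > 0" "\<And>i. ball (u0 i) (e i) \<subseteq> X i" by metis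
  define C where "C i = (if i < k then ball (u0 i) (e i) else {0})" for i
  have mem: "x \<in> Pi\<^sub>E UNIV C \<longleftrightarrow> (\<forall>i. (i < k \<longrightarrow> x i \<in> ball (u0 i) (e i)) \<and> (\<not> i < k \<longrightarrow> x i = 0))"
    for x by (simp add: PiE_iff C_def if_bool_eq_conj)
  have u0k: "u0 \<in> Rn k" using u0 T(2) by blast
  show thesis
  proof
    have "Pi\<^sub>E UNIV C = Rn k \<inter> Pi\<^sub>E UNIV (\<lambda>i. if i < k then ball (u0 i) (e i) else UNIV)"
      by (rule set_eqI, unfold mem) (auto simp: PiE_iff Rn_def if_bool_eq_conj not_less)
    moreover have "open (Pi\<^sub>E UNIV (\<lambda>i. if i < k then ball (u0 i) (e i) else UNIV))"
      by (rule open_PiE) auto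
    ultimately show "openin (Rn_top k) (Pi\<^sub>E UNIV C)"
      unfolding Rn_top_def by (simp add: openin_open_Int)
    show "u0 \<in> Pi\<^sub>E UNIV C" using mem u0k e(1) by (simp add: Rn_def not_less)
    have "Pi\<^sub>E UNIV C \<subseteq> Pi\<^sub>E UNIV X"
    proof
      fix x assume "x \<in> Pi\<^sub>E UNIV C"
      then have x: "i < k \<Longrightarrow> x i \<in> ball (u0 i) (e i)" "\<not> i < k \<Longrightarrow> x i = 0" for i
        unfolding mem by blast+
      have "x i \<in> X i" for i
        using x[of i] e(2)[of i] X(1) u0k by (cases "i < k") (auto simp: PiE_iff Rn_def not_less, metis)
      then show "x \<in> Pi\<^sub>E UNIV X" by (simp add: PiE_iff)
    qed
    then show "Pi\<^sub>E UNIV C \<subseteq> U" using X(3) T(2) mem by (auto simp: Rn_def not_less)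
    have "connectedin (product_topology (\<lambda>i. euclidean) UNIV) (Pi\<^sub>E UNIV C)"
      by (simp add: connectedin_PiE C_def)
    then show "connected (Pi\<^sub>E UNIV C)" by (simp add: euclidean_product_topology)
  qed
qed

lemma constant_on_connected_if_open_levels:
  assumes levels: "\<And>y. openin (top_of_set S) {x\<in>S. h x = y}"
    and V: "connected V" "V \<subseteq> S"
  shows "h constant_on V"
proof (rule locally_constant_imp_constant[OF V(1)])
  fix a assume a: "a \<in> V"
  obtain T where T: "open T" "{x\<in>S. h x = h a} = S \<inter> T"
    using levels[of "h a"] unfolding openin_open by blast
  show "\<exists>T'. openin (top_of_set V) T' \<and> a \<in> T' \<and> (\<forall>x\<in>T'. h x = h a)"
    using T V(2) a by (intro exI[of _ "V \<inter> T"]) (auto simp: openin_open_Int)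
qed

lemma Tpts_vertex: "v \<in> lists A \<Longrightarrow> (v, 1) \<in> Tpts A"
  unfolding Tpts_def by blast

lemma Tpts_fst: "p \<in> Tpts A \<Longrightarrow> fst p \<in> lists A"
  unfolding Tpts_def by auto

lemma edge_map_in_Tpts:
  "w \<in> lists A \<Longrightarrow> w \<noteq> [] \<Longrightarrow> t \<in> {0..1} \<Longrightarrow> edge_map w t \<in> Tpts A"
  unfolding edge_map_def Tpts_def by (force dest: in_set_butlastD)

lemma openin_T_top: "openin (T_top A) S = T_open A S"
  unfolding T_top_def by (simp add: istopology_T_open topology_inverse')

lemma topspace_T_top: "topspace (T_top A) = Tpts A"
proof -
  have "T_open A (Tpts A)"
    unfolding T_open_def
  proof (intro conjI ballI)
    fix w assume "w \<in> lists A - {[]}"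
    then have "{t\<in>{0..1::real}. edge_map w t \<in> Tpts A} = {0..1}" using edge_map_in_Tpts by fastforce
    then show "openin (top_of_set {0..1::real}) {t\<in>{0..1}. edge_map w t \<in> Tpts A}" by simp
  qed simp
  then show ?thesis unfolding topspace_def openin_T_top T_open_def by blast
qed

text \<open>The vertex \<open>v\<close> together with its open incident edges: in the encoding of \<open>Tpts\<close> the edge
  to the parent is labelled by \<open>v\<close> itself, the edges to the children by words with \<open>butlast\<close> \<open>v\<close>.\<close>

definition open_star :: "'a set \<Rightarrow> 'a list \<Rightarrow> ('a list \<times> real) set" where
  "open_star A v = {p \<in> Tpts A. fst p = v \<or> (snd p < 1 \<and> fst p \<noteq> [] \<and> butlast (fst p) = v)}"

lemma T_open_open_star: "T_open A (open_star A v)"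
  unfolding T_open_def
proof (intro conjI ballI)
  show "open_star A v \<subseteq> Tpts A" unfolding open_star_def by blast
  fix w assume w: "w \<in> lists A - {[]}"
  then have "butlast w \<noteq> w" by (metis DiffD2 append_butlast_last_id append_self_conv singletonI not_Cons_self2)
  define T :: "real set" where "T = (if w = v then {0<..} else {}) \<union> (if butlast w = v then {..<1} else {})"
  have "open T" unfolding T_def by auto
  moreover have "{t\<in>{0..1}. edge_map w t \<in> open_star A v} = {0..1} \<inter> T"
  proof -
    have "(butlast w, 1) \<in> Tpts A"
      using w edge_map_in_Tpts[of w A 0] by (simp add: edge_map_def)
    moreover have "(w, t) \<in> Tpts A" if "0 < t" "t \<le> 1" for t
      using w that edge_map_in_Tpts[of w A t] by (simp add: edge_map_def)
    ultimately show ?thesis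
      using w \<open>butlast w \<noteq> w\<close> by (auto simp: T_def open_star_def edge_map_def)
  qed
  ultimately show "openin (top_of_set {0..1::real}) {t\<in>{0..1}. edge_map w t \<in> open_star A v}"
    by (simp add: openin_open_Int)
qed

lemma vertex_in_open_star: "(x, 1) \<in> open_star A w \<longleftrightarrow> (x, 1) \<in> Tpts A \<and> x = w"
  unfolding open_star_def by auto

definition continuous_plot :: "'a set \<Rightarrow> nat \<Rightarrow> (nat \<Rightarrow> real) set \<Rightarrow> ((nat \<Rightarrow> real) \<Rightarrow> 'a list \<times> real) \<Rightarrow> bool" where
  "continuous_plot A n U R \<longleftrightarrow> openin (Rn_top n) U \<and> R ` U \<subseteq> Tpts A \<and>
     (\<forall>S. T_open A S \<longrightarrow> openin (Rn_top n) {u\<in>U. R u \<in> S})"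

lemma continuous_plot_diffeology: "is_diffeology (Tpts A) (continuous_plot A)"
proof (rule is_diffeologyI)
  fix n U P Q assume P: "continuous_plot A n U P" and Q: "\<And>u. u \<in> U \<Longrightarrow> Q u = P u"
  then have "{u\<in>U. Q u \<in> S} = {u\<in>U. P u \<in> S}" for S by auto
  with P Q show "continuous_plot A n U Q" unfolding continuous_plot_def by auto
next
  fix n U x assume "openin (Rn_top n) U" "x \<in> Tpts A"
  moreover have "{u\<in>U. x \<in> S} = (if x \<in> S then U else {})" for S by auto
  ultimately show "continuous_plot A n U (\<lambda>_. x)" unfolding continuous_plot_def by auto
next
  fix n U P m V F assume P: "continuous_plot A n U P" and V: "openin (Rn_top m) V"
    and F: "smooth_map m V n U F"
  have U: "openin (Rn_top n) U" using P unfolding continuous_plot_def by blast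
  have FV: "F ` V \<subseteq> U" using F unfolding smooth_map_def by blast
  show "continuous_plot A m V (P \<circ> F)"
    unfolding continuous_plot_def
  proof (intro conjI allI impI)
    show "(P \<circ> F) ` V \<subseteq> Tpts A" using P FV unfolding continuous_plot_def by auto
    fix S assume "T_open A S"
    then have "openin (Rn_top n) {u\<in>U. P u \<in> S}" using P unfolding continuous_plot_def by blast
    from openin_Rn_top_preimage[OF V smooth_map_continuous[OF F U] FV U this]
    have "openin (Rn_top m) {v\<in>V. F v \<in> {u\<in>U. P u \<in> S}}" .
    moreover have "{v\<in>V. F v \<in> {u\<in>U. P u \<in> S}} = {v\<in>V. (P \<circ> F) v \<in> S}" using FV by auto
    ultimately show "openin (Rn_top m) {v\<in>V. (P \<circ> F) v \<in> S}" by simp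
  qed (rule V)
next
  fix n U P assume U: "openin (Rn_top n) U" "P ` U \<subseteq> Tpts A"
    and loc: "\<And>u. u \<in> U \<Longrightarrow> \<exists>V. openin (Rn_top n) V \<and> u \<in> V \<and> V \<subseteq> U \<and> continuous_plot A n V P"
  then obtain V where V: "\<And>u. u \<in> U \<Longrightarrow> u \<in> V u \<and> V u \<subseteq> U \<and> continuous_plot A n (V u) P"
    by metis
  show "continuous_plot A n U P"
    unfolding continuous_plot_def
  proof (intro conjI allI impI)
    fix S assume "T_open A S"
    then have "openin (Rn_top n) (\<Union>u\<in>U. {v\<in>V u. P v \<in> S})"
      using V unfolding continuous_plot_def by (intro openin_Union) auto
    moreover have "{u\<in>U. P u \<in> S} = (\<Union>u\<in>U. {v\<in>V u. P v \<in> S})" using V by blast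
    ultimately show "openin (Rn_top n) {u\<in>U. P u \<in> S}" by simp
  qed (use U in auto)
qed (auto simp: continuous_plot_def)

lemma wire_continuous_plot:
  assumes "\<gamma> \<in> wires A"
  shows "continuous_plot A 1 (Rn 1) (\<lambda>x. \<gamma> (x 0))"
  unfolding continuous_plot_def
proof (intro conjI allI impI)
  have \<gamma>: "continuous_map euclideanreal (T_top A) \<gamma>" "range \<gamma> \<subseteq> Tpts A"
    using assms unfolding wires_def by auto
  then show "(\<lambda>x. \<gamma> (x 0)) ` Rn 1 \<subseteq> Tpts A" by auto
  fix S assume "T_open A S"
  then have "open (\<gamma> -` S)"
    using \<gamma>(1) unfolding continuous_map_def openin_T_top by (simp add: vimage_def)
  moreover have "continuous_on (Rn 1) (\<lambda>x. x 0)"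
    by (rule continuous_on_subset[OF continuous_on_product_coordinates]) simp
  ultimately have "openin (top_of_set (Rn 1)) (Rn 1 \<inter> (\<lambda>x. x 0) -` (\<gamma> -` S))"
    by (rule continuous_openin_preimage_gen[rotated])
  moreover have "Rn 1 \<inter> (\<lambda>x. x 0) -` (\<gamma> -` S) = {x\<in>Rn 1. \<gamma> (x 0) \<in> S}" by auto
  ultimately show "openin (Rn_top 1) {x\<in>Rn 1. \<gamma> (x 0) \<in> S}"
    unfolding Rn_top_def by simp
qed (simp add: Rn_top_def)

lemma wire_plot_diffeology: "is_diffeology (Tpts A) (wire_plot A)"
  by (rule gen_plot_diffeology) (simp add: wires_def)

lemma wire_plot_continuous_plot: "wire_plot A n U R \<Longrightarrow> continuous_plot A n U R"
  using gen_plot_least continuous_plot_diffeology wire_continuous_plot by metis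

lemma tree_aut_lists: "is_tree_aut A h \<Longrightarrow> w \<in> lists A \<Longrightarrow> h w \<in> lists A"
  unfolding is_tree_aut_def by (meson bij_betwE)

lemma tree_aut_inj: "is_tree_aut A h \<Longrightarrow> inj_on h (lists A)"
  unfolding is_tree_aut_def by (meson bij_betw_imp_inj_on)

text \<open>Were \<open>h (v @ [a])\<close> the parent of \<open>h v\<close>, then, \<open>h v\<close> being by induction a child of
  \<open>h (butlast v)\<close>, injectivity would give \<open>butlast v = v @ [a]\<close>; for \<open>v = []\<close> use \<open>h [] = []\<close>.\<close>

lemma tree_aut_child:
  assumes h: "is_tree_aut A h" and va: "v @ [a] \<in> lists A"
  shows "\<exists>b\<in>A. h (v @ [a]) = h v @ [b]"
  using va
proof (induction v arbitrary: a rule: rev_induct)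
  case Nil
  then have "tree_adj A (h []) (h [a])"
    using h unfolding is_tree_aut_def tree_adj_def by (metis append_Nil in_listsD list.set_intros(1) lists.Nil)
  then show ?case using h unfolding is_tree_aut_def tree_adj_def by auto
next
  case (snoc c v')
  let ?v = "v' @ [c]"
  have v: "?v \<in> lists A" and a: "a \<in> A" using snoc.prems by auto
  have "tree_adj A ?v (?v @ [a])" unfolding tree_adj_def using a by blast
  then have "tree_adj A (h ?v) (h (?v @ [a]))"
    using h v snoc.prems unfolding is_tree_aut_def by blast
  then consider "\<exists>b\<in>A. h (?v @ [a]) = h ?v @ [b]" | b where "h ?v = h (?v @ [a]) @ [b]"
    unfolding tree_adj_def by blast
  then show ?case
  proof cases
    case 1
    then show ?thesis .
  next
    case 2
    obtain d where "h ?v = h v' @ [d]" using snoc.IH[OF v] by blast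
    with 2 have "h v' = h (?v @ [a])" by (metis butlast_snoc)
    then have "v' = ?v @ [a]"
      using tree_aut_inj[OF h] v snoc.prems by (simp add: inj_on_eq_iff)
    then show ?thesis by simp
  qed
qed

lemma tree_aut_parent:
  assumes h: "is_tree_aut A h" and w: "w \<in> lists A" "w \<noteq> []"
  shows "h w \<noteq> []" "butlast (h w) = h (butlast w)"
proof -
  have "butlast w @ [last w] \<in> lists A" using w by simp
  from tree_aut_child[OF h this] show "h w \<noteq> []" "butlast (h w) = h (butlast w)"
    using w(2) by auto
qed

lemma tree_aut_inv:
  assumes h: "is_tree_aut A h"
  shows "is_tree_aut A (inv_into (lists A) h)"
proof -
  let ?g = "inv_into (lists A) h"
  have b: "bij_betw h (lists A) (lists A)" and h0: "h [] = []"
    and adj: "\<And>u v. u \<in> lists A \<Longrightarrow> v \<in> lists A \<Longrightarrow> tree_adj A u v \<longleftrightarrow> tree_adj A (h u) (h v)"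
    using h unfolding is_tree_aut_def by blast+
  have gb: "bij_betw ?g (lists A) (lists A)" by (rule bij_betw_inv_into[OF b])
  have "?g [] = []" using inv_into_f_eq[OF bij_betw_imp_inj_on[OF b], of "[]" "[]"] h0 by simp
  moreover have "tree_adj A u v \<longleftrightarrow> tree_adj A (?g u) (?g v)" if "u \<in> lists A" "v \<in> lists A" for u v
    using adj[OF bij_betw_apply[OF gb that(1)] bij_betw_apply[OF gb that(2)]] b that
    by (simp add: bij_betw_inv_into_right)
  ultimately show ?thesis unfolding is_tree_aut_def using gb by blast
qed

lemma realize_vertex: "v \<in> lists A \<Longrightarrow> realize A h (v, 1) = (h v, 1)"
  unfolding realize_def by (simp add: Tpts_vertex)

lemma realize_eqI:
  assumes "\<And>v. v \<in> lists A \<Longrightarrow> g v = h v"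
  shows "realize A g = realize A h"
proof
  fix p show "realize A g p = realize A h p"
    using assms Tpts_fst[of p A] unfolding realize_def by (cases "p \<in> Tpts A") auto
qed

lemma realize_in_Tpts:
  assumes h: "is_tree_aut A h" and p: "p \<in> Tpts A"
  shows "realize A h p \<in> Tpts A"
proof -
  obtain w s where ws: "p = (w, s)" by fastforce
  have w: "h w \<in> lists A" using tree_aut_lists[OF h Tpts_fst[OF p]] ws by simp
  have "s = 1 \<or> (w \<noteq> [] \<and> 0 < s \<and> s < 1)" "w \<in> lists A" using p ws unfolding Tpts_def by auto
  then have "s = 1 \<or> (h w \<noteq> [] \<and> 0 < s \<and> s < 1)" using tree_aut_parent(1)[OF h] by blast
  then show ?thesis using p ws w unfolding realize_def Tpts_def by auto
qed

lemma realize_edge_map: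
  assumes h: "is_tree_aut A h" and w: "w \<in> lists A" "w \<noteq> []" and t: "t \<in> {0..1}"
  shows "realize A h (edge_map w t) = edge_map (h w) t"
  using edge_map_in_Tpts[OF w t] tree_aut_parent[OF h w]
  unfolding realize_def edge_map_def by auto

lemma realize_continuous_map:
  assumes h: "is_tree_aut A h"
  shows "continuous_map (T_top A) (T_top A) (realize A h)"
  unfolding continuous_map_def topspace_T_top
proof (intro conjI allI impI Pi_I)
  fix p assume "p \<in> Tpts A" then show "realize A h p \<in> Tpts A" by (rule realize_in_Tpts[OF h])
next
  fix S assume S: "openin (T_top A) S"
  show "openin (T_top A) {x \<in> Tpts A. realize A h x \<in> S}"
    unfolding openin_T_top T_open_def
  proof (intro conjI ballI)
    fix w assume w: "w \<in> lists A - {[]}"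
    then have hw: "h w \<in> lists A - {[]}"
      using tree_aut_lists[OF h] tree_aut_parent(1)[OF h] by blast
    have wl: "w \<in> lists A" "w \<noteq> []" using w by auto
    have "edge_map w t \<in> {x \<in> Tpts A. realize A h x \<in> S} \<longleftrightarrow> edge_map (h w) t \<in> S"
      if "t \<in> {0..1}" for t
      using realize_edge_map[OF h wl that] edge_map_in_Tpts[OF wl that] by auto
    then have "{t\<in>{0..1}. edge_map w t \<in> {x \<in> Tpts A. realize A h x \<in> S}} =
        {t\<in>{0..1}. edge_map (h w) t \<in> S}"
      by blast
    moreover have "openin (top_of_set {0..1::real}) {t\<in>{0..1}. edge_map (h w) t \<in> S}"
      using S hw unfolding openin_T_top T_open_def by blast
    ultimately show "openin (top_of_set {0..1::real}) {t\<in>{0..1}. edge_map w t \<in> {x \<in> Tpts A. realize A h x \<in> S}}"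
      by simp
  qed blast
qed

lemma realize_inv_into:
  assumes h: "is_tree_aut A h" and p: "p \<in> Tpts A"
  shows "realize A (inv_into (lists A) h) (realize A h p) = p"
proof -
  have "bij_betw h (lists A) (lists A)" using h unfolding is_tree_aut_def by blast
  then show ?thesis
    using realize_in_Tpts[OF h p] p Tpts_fst[OF p]
    unfolding realize_def by (simp add: bij_betw_inv_into_left)
qed

lemma realize_homeomorphic_map:
  assumes h: "is_tree_aut A h"
  shows "homeomorphic_map (T_top A) (T_top A) (realize A h)"
proof -
  let ?g = "inv_into (lists A) h"
  have g: "is_tree_aut A ?g" by (rule tree_aut_inv[OF h])
  have "inv_into (lists A) ?g v = h v" if "v \<in> lists A" for v
    using h that unfolding is_tree_aut_def by (simp add: inv_into_inv_into_eq)
  then have "realize A (inv_into (lists A) ?g) = realize A h" by (rule realize_eqI)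
  then have "realize A h (realize A ?g p) = p" if "p \<in> Tpts A" for p
    using realize_inv_into[OF g that] by simp
  then show ?thesis
    unfolding homeomorphic_map_maps homeomorphic_maps_def
    by (intro exI[of _ "realize A ?g"] conjI realize_continuous_map h g ballI)
       (simp_all add: topspace_T_top realize_inv_into[OF h])
qed

lemma realize_wire:
  assumes h: "is_tree_aut A h" and \<gamma>: "\<gamma> \<in> wires A"
  shows "realize A h \<circ> \<gamma> \<in> wires A"
proof -
  have range: "range \<gamma> \<subseteq> Tpts A" and "inj \<gamma>"
    and cont: "continuous_map euclideanreal (T_top A) \<gamma>"
    and homeo: "homeomorphic_map euclideanreal (subtopology (T_top A) (range \<gamma>)) \<gamma>"
    using \<gamma> unfolding wires_def by auto
  have range': "range (realize A h \<circ> \<gamma>) \<subseteq> Tpts A"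
    using range realize_in_Tpts[OF h] by (simp add: image_subset_iff)
  have "inj (realize A h \<circ> \<gamma>)"
  proof (rule injI)
    fix x y assume "(realize A h \<circ> \<gamma>) x = (realize A h \<circ> \<gamma>) y"
    then have "realize A (inv_into (lists A) h) (realize A h (\<gamma> x)) =
        realize A (inv_into (lists A) h) (realize A h (\<gamma> y))" by simp
    then have "\<gamma> x = \<gamma> y" using realize_inv_into[OF h] range by (simp add: range_subsetD)
    then show "x = y" using \<open>inj \<gamma>\<close> by (simp add: inj_eq)
  qed
  moreover have "continuous_map euclideanreal (T_top A) (realize A h \<circ> \<gamma>)"
    by (rule continuous_map_compose[OF cont realize_continuous_map[OF h]])
  moreover have "homeomorphic_map (subtopology (T_top A) (range \<gamma>))
      (subtopology (T_top A) (range (realize A h \<circ> \<gamma>))) (realize A h)"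
    by (rule homeomorphic_map_subtopologies[OF realize_homeomorphic_map[OF h]])
      (use range range' in \<open>auto simp: topspace_T_top image_comp\<close>)
  then have "homeomorphic_map euclideanreal (subtopology (T_top A) (range (realize A h \<circ> \<gamma>)))
      (realize A h \<circ> \<gamma>)"
    by (rule homeomorphic_map_compose[OF homeo])
  ultimately show ?thesis unfolding wires_def using range' by blast
qed

lemma wire_plot_realize:
  assumes "is_tree_aut A h" "wire_plot A n U R"
  shows "wire_plot A n U (realize A h \<circ> R)"
proof (rule gen_plot_map[OF _ _ realize_wire[OF assms(1)] assms(2)])
  show "realize A h ` Tpts A \<subseteq> Tpts A" using realize_in_Tpts[OF assms(1)] by blast
qed (simp add: wires_def)

lemma AutT_memE:
  assumes "f \<in> AutT A"
  obtains g where "is_tree_aut A g" "f = realize A g"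
  using assms unfolding AutT_def by blast

lemma AutT_in_Tpts:
  assumes "f \<in> AutT A" "p \<in> Tpts A"
  shows "f p \<in> Tpts A"
  using assms(1) by (rule AutT_memE) (simp add: realize_in_Tpts assms(2))

lemma aut_plotD:
  assumes "aut_plot A k U P" "openin (Rn_top m) W" "smooth_map m W k U F" "wire_plot A m W Q"
  shows "wire_plot A m W (\<lambda>w. P (F w) (Q w))"
  using assms unfolding aut_plot_def by blast

lemma aut_plot_vertex_levels_openin:
  assumes P: "aut_plot A k U P" and v: "v \<in> lists A"
  shows "openin (Rn_top k) {u\<in>U. fst (P u (v, 1)) = w}"
proof -
  have U: "openin (Rn_top k) U" and PU: "P ` U \<subseteq> AutT A" using P by (simp_all add: aut_plot_def)
  have "wire_plot A k U (\<lambda>_. (v, 1))"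
    by (rule diffeology_const_plot[OF wire_plot_diffeology U Tpts_vertex[OF v]])
  from aut_plotD[OF P U smooth_map_inclusion this] have "wire_plot A k U (\<lambda>u. P (id u) (v, 1))"
    by simp
  then have "continuous_plot A k U (\<lambda>u. P u (v, 1))" by (simp add: wire_plot_continuous_plot)
  then have "openin (Rn_top k) {u\<in>U. P u (v, 1) \<in> open_star A w}"
    using T_open_open_star unfolding continuous_plot_def by blast
  moreover have "{u\<in>U. P u (v, 1) \<in> open_star A w} = {u\<in>U. fst (P u (v, 1)) = w}"
  proof (rule Collect_cong, rule conj_cong)
    fix u assume "u \<in> U"
    obtain g where g: "is_tree_aut A g" "P u = realize A g"
      using PU \<open>u \<in> U\<close> by (blast elim: AutT_memE)
    show "P u (v, 1) \<in> open_star A w \<longleftrightarrow> fst (P u (v, 1)) = w"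
      using g realize_vertex[OF v] Tpts_vertex[OF tree_aut_lists[OF g(1) v]] by (simp add: vertex_in_open_star)
  qed simp
  ultimately show ?thesis by simp
qed

lemma aut_plot_vertex_constant_on:
  assumes P: "aut_plot A k U P" and v: "v \<in> lists A" and V: "connected V" "V \<subseteq> U"
  shows "(\<lambda>u. fst (P u (v, 1))) constant_on V"
proof (rule constant_on_connected_if_open_levels[OF _ V])
  fix w
  have "U \<subseteq> Rn k" using P openin_Rn_top_subset unfolding aut_plot_def by blast
  with aut_plot_vertex_levels_openin[OF P v, of w]
  show "openin (top_of_set U) {u\<in>U. fst (P u (v, 1)) = w}"
    unfolding Rn_top_def using openin_subset_trans by blast
qed

lemma aut_plot_imp_discrete_plot:
  assumes P: "aut_plot A k U P"
  shows "discrete_plot (AutT A) k U P"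
  unfolding discrete_plot_def
proof (intro conjI ballI)
  show U: "openin (Rn_top k) U" and PU: "P ` U \<subseteq> AutT A" using P by (simp_all add: aut_plot_def)
  fix u0 assume u0: "u0 \<in> U"
  obtain V where V: "openin (Rn_top k) V" "u0 \<in> V" "V \<subseteq> U" "connected V"
    using Rn_top_connected_neighbourhood[OF U u0] .
  have "P u0 \<in> AutT A" using PU u0 by blast
  then obtain g0 where g0: "is_tree_aut A g0" "P u0 = realize A g0" by (rule AutT_memE)
  have "P u = P u0" if u: "u \<in> V" for u
  proof -
    have "P u \<in> AutT A" using PU u V(3) by blast
    then obtain g where g: "is_tree_aut A g" "P u = realize A g" by (rule AutT_memE)
    have "g v = g0 v" if v: "v \<in> lists A" for v
    proof -
      obtain c where "\<And>x. x \<in> V \<Longrightarrow> fst (P x (v, 1)) = c"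
        using aut_plot_vertex_constant_on[OF P v V(4,3)] unfolding constant_on_def by blast
      then have "fst (P u (v, 1)) = fst (P u0 (v, 1))" using u V(2) by simp
      then show ?thesis by (simp add: g g0 realize_vertex[OF v])
    qed
    then have "realize A g = realize A g0" by (rule realize_eqI)
    with g g0 show ?thesis by simp
  qed
  with V show "\<exists>V. openin (Rn_top k) V \<and> u0 \<in> V \<and> V \<subseteq> U \<and> (\<forall>v\<in>V. P v = P u0)" by blast
qed

lemma discrete_plot_imp_aut_plot:
  assumes P: "discrete_plot (AutT A) k U P"
  shows "aut_plot A k U P"
  unfolding aut_plot_def
proof (intro conjI allI impI)
  show U: "openin (Rn_top k) U" and PU: "P ` U \<subseteq> AutT A"
    using P by (simp_all add: discrete_plot_def)
  fix m W F Q assume "openin (Rn_top m) W \<and> smooth_map m W k U F \<and> wire_plot A m W Q"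
  then have W: "openin (Rn_top m) W" and F: "smooth_map m W k U F" and Q: "wire_plot A m W Q"
    by blast+
  have FW: "F ` W \<subseteq> U" using F unfolding smooth_map_def by blast
  show "wire_plot A m W (\<lambda>w. P (F w) (Q w))"
  proof (rule diffeology_plot_local[OF wire_plot_diffeology W])
    show "(\<lambda>w. P (F w) (Q w)) ` W \<subseteq> Tpts A"
    proof (rule image_subsetI)
      fix w assume "w \<in> W"
      then have "P (F w) \<in> AutT A" "Q w \<in> Tpts A"
        using PU FW diffeology_plot_domain(2)[OF wire_plot_diffeology Q] by blast+
      then show "P (F w) (Q w) \<in> Tpts A" by (rule AutT_in_Tpts)
    qed
    fix w0 assume w0: "w0 \<in> W"
    have "F w0 \<in> U" using FW w0 by blast
    with P obtain V where V: "openin (Rn_top k) V" "F w0 \<in> V" "V \<subseteq> U" "\<forall>v\<in>V. P v = P (F w0)"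
      unfolding discrete_plot_def by blast
    have "P (F w0) \<in> AutT A" using PU FW w0 by blast
    then obtain g where g: "is_tree_aut A g" "P (F w0) = realize A g" by (rule AutT_memE)
    define W' where "W' = {w\<in>W. F w \<in> V}"
    have W': "openin (Rn_top m) W'" "W' \<subseteq> W"
      unfolding W'_def using openin_Rn_top_preimage[OF W smooth_map_continuous[OF F U] FW U V(1)] by auto
    have "wire_plot A m W' (realize A g \<circ> Q)"
      by (rule wire_plot_realize[OF g(1) diffeology_plot_restrict[OF wire_plot_diffeology Q W']])
    then have "wire_plot A m W' (\<lambda>w. P (F w) (Q w))"
      by (rule diffeology_plot_cong[OF wire_plot_diffeology]) (simp add: W'_def V(4) g(2))
    with W' w0 V(2) show "\<exists>V. openin (Rn_top m) V \<and> w0 \<in> V \<and> V \<subseteq> W \<and> wire_plot A m V (\<lambda>w. P (F w) (Q w))"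
      unfolding W'_def by blast
  qed
qed

theorem mainTheorem7:
  fixes A :: "'a set" and k :: nat and U :: "(nat \<Rightarrow> real) set"
    and P :: "(nat \<Rightarrow> real) \<Rightarrow> ('a list \<times> real \<Rightarrow> 'a list \<times> real)"
  assumes "finite A" and "card A \<ge> 2"
  shows "aut_plot A k U P \<longleftrightarrow> discrete_plot (AutT A) k U P"
  using aut_plot_imp_discrete_plot discrete_plot_imp_aut_plot by blast

end
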